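(* Let $R$ be a commutative ring and let $(A,d)$ be a differential graded $R$-algebra. (1) If the graded algebra $\ker(d)$ is graded-Noetherian, then $(A,d)$ is dg-Noetherian. (2) If $\ker(d)$ is graded-Artinian, then $(A,d)$ is dg-Artinian.
   Context: A differential graded (dg) $R$-algebra $(A,d)$ is a $\mathbb{Z}$-graded $R$-algebra $A$ with an $R$-linear endomorphism $d$, homogeneous of degree $1$, with $d^2=0$ and $d(ab)=d(a)b+(-1)^{|a|}a\,d(b)$ for homogeneous $a,b$. Then $\ker(d)$ (the cycles) is a graded subalgebra of $A$. A graded algebra is graded-Noetherian (resp. graded-Artinian) if it satisfies the ascending (resp. descending) chain condition on graded ideals. A dg-ideal of $(A,d)$ is a graded ideal $I$ with $d(I)\subseteq I$; $(A,d)$ is dg-Noetherian (resp. dg-Artinian) if it satisfies the ascending (resp. descending) chain condition on dg-ideals (i.e. on dg-submodules of $A$ viewed as a dg-module over itself). *)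

theory Defs
  imports Main
begin

text \<open>A (Z-)graded R-algebra is modelled as a unital ring type 'a together with
  a scalar action smul of a commutative ring 'r and a family of homogeneous
  components G :: int \<Rightarrow> 'a set giving a direct-sum decomposition of UNIV.\<close>

definition homogeneous_decomp :: "(int \<Rightarrow> 'a::ring_1 set) \<Rightarrow> 'a set \<Rightarrow> 'a \<Rightarrow> bool" where
  "homogeneous_decomp G S x \<longleftrightarrow>
     (\<exists>c :: int \<Rightarrow> 'a. finite {n. c n \<noteq> 0} \<and> (\<forall>n. c n \<in> S \<inter> G n) \<and>
        x = (\<Sum>n\<in>{n. c n \<noteq> 0}. c n))"

definition graded_R_algebra ::
  "('r::comm_ring_1 \<Rightarrow> 'a::ring_1 \<Rightarrow> 'a) \<Rightarrow> (int \<Rightarrow> 'a set) \<Rightarrow> bool" where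
  "graded_R_algebra smul G \<longleftrightarrow>
     \<comment> \<open>R-algebra structure\<close>
     (\<forall>r s x. smul (r + s) x = smul r x + smul s x) \<and>
     (\<forall>r x y. smul r (x + y) = smul r x + smul r y) \<and>
     (\<forall>r s x. smul (r * s) x = smul r (smul s x)) \<and>
     (\<forall>x. smul 1 x = x) \<and>
     (\<forall>r x y. smul r (x * y) = smul r x * y) \<and>
     (\<forall>r x y. smul r (x * y) = x * smul r y) \<and>
     \<comment> \<open>grading\<close>
     (\<forall>n. 0 \<in> G n \<and> (\<forall>x\<in>G n. \<forall>y\<in>G n. x + y \<in> G n \<and> - x \<in> G n)
          \<and> (\<forall>r. \<forall>x\<in>G n. smul r x \<in> G n)) \<and>
     1 \<in> G 0 \<and>
     (\<forall>m n. \<forall>x\<in>G m. \<forall>y\<in>G n. x * y \<in> G (m + n)) \<and>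
     (\<forall>x. \<exists>!c :: int \<Rightarrow> 'a. finite {n. c n \<noteq> 0} \<and> (\<forall>n. c n \<in> G n) \<and>
        x = (\<Sum>n\<in>{n. c n \<noteq> 0}. c n))"

definition homogeneous :: "(int \<Rightarrow> 'a set) \<Rightarrow> 'a \<Rightarrow> bool" where
  "homogeneous G x \<longleftrightarrow> (\<exists>n. x \<in> G n)"

definition dg_R_algebra ::
  "('r::comm_ring_1 \<Rightarrow> 'a::ring_1 \<Rightarrow> 'a) \<Rightarrow> (int \<Rightarrow> 'a set) \<Rightarrow> ('a \<Rightarrow> 'a) \<Rightarrow> bool" where
  "dg_R_algebra smul G d \<longleftrightarrow>
     graded_R_algebra smul G \<and>
     (\<forall>x y. d (x + y) = d x + d y) \<and>
     (\<forall>r x. d (smul r x) = smul r (d x)) \<and>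
     (\<forall>n. \<forall>x\<in>G n. d x \<in> G (n + 1)) \<and>
     (\<forall>x. d (d x) = 0) \<and>
     (\<forall>m. \<forall>a\<in>G m. \<forall>b. homogeneous G b \<longrightarrow>
        d (a * b) = d a * b + (if even m then a * d b else - (a * d b)))"

text \<open>Graded (left) ideal of the graded subalgebra with carrier S and grading
  \<open>\<lambda>n. S \<inter> G n\<close>.\<close>

definition graded_ideal_in :: "'a::ring_1 set \<Rightarrow> (int \<Rightarrow> 'a set) \<Rightarrow> 'a set \<Rightarrow> bool" where
  "graded_ideal_in S G I \<longleftrightarrow>
     I \<subseteq> S \<and> 0 \<in> I \<and>
     (\<forall>x\<in>I. \<forall>y\<in>I. x - y \<in> I) \<and>
     (\<forall>s\<in>S. \<forall>x\<in>I. s * x \<in> I) \<and>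
     (\<forall>x\<in>I. homogeneous_decomp G I x)"

definition cycles :: "('a \<Rightarrow> 'a::ring_1) \<Rightarrow> 'a set" where
  "cycles d = {x. d x = 0}"

definition graded_noetherian :: "'a::ring_1 set \<Rightarrow> (int \<Rightarrow> 'a set) \<Rightarrow> bool" where
  "graded_noetherian S G \<longleftrightarrow>
     (\<forall>I :: nat \<Rightarrow> 'a set. (\<forall>n. graded_ideal_in S G (I n)) \<and> (\<forall>n. I n \<subseteq> I (Suc n))
        \<longrightarrow> (\<exists>N. \<forall>n\<ge>N. I n = I N))"

definition graded_artinian :: "'a::ring_1 set \<Rightarrow> (int \<Rightarrow> 'a set) \<Rightarrow> bool" where
  "graded_artinian S G \<longleftrightarrow>
     (\<forall>I :: nat \<Rightarrow> 'a set. (\<forall>n. graded_ideal_in S G (I n)) \<and> (\<forall>n. I (Suc n) \<subseteq> I n)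
        \<longrightarrow> (\<exists>N. \<forall>n\<ge>N. I n = I N))"

definition dg_ideal :: "(int \<Rightarrow> 'a::ring_1 set) \<Rightarrow> ('a \<Rightarrow> 'a) \<Rightarrow> 'a set \<Rightarrow> bool" where
  "dg_ideal G d I \<longleftrightarrow> graded_ideal_in UNIV G I \<and> d ` I \<subseteq> I"

definition dg_noetherian :: "(int \<Rightarrow> 'a::ring_1 set) \<Rightarrow> ('a \<Rightarrow> 'a) \<Rightarrow> bool" where
  "dg_noetherian G d \<longleftrightarrow>
     (\<forall>I :: nat \<Rightarrow> 'a set. (\<forall>n. dg_ideal G d (I n)) \<and> (\<forall>n. I n \<subseteq> I (Suc n))
        \<longrightarrow> (\<exists>N. \<forall>n\<ge>N. I n = I N))"

definition dg_artinian :: "(int \<Rightarrow> 'a::ring_1 set) \<Rightarrow> ('a \<Rightarrow> 'a) \<Rightarrow> bool" where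
  "dg_artinian G d \<longleftrightarrow>
     (\<forall>I :: nat \<Rightarrow> 'a set. (\<forall>n. dg_ideal G d (I n)) \<and> (\<forall>n. I (Suc n) \<subseteq> I n)
        \<longrightarrow> (\<exists>N. \<forall>n\<ge>N. I n = I N))"

end

theory Submission
  imports Defs "HOL.Modules"
begin

text \<open>For a graded left ideal \<open>I\<close> of \<open>A\<close>, both \<open>I \<inter> ker d\<close> and \<open>d(I)\<close> are graded ideals
  of the cycle algebra \<open>Z = ker d\<close>; the second because for a homogeneous cycle \<open>z\<close> of degree
  \<open>m\<close> the Leibniz rule gives \<open>z \<cdot> d x = \<plusminus>d(z \<cdot> x)\<close>. If \<open>I \<subseteq> J\<close> have the same cycles and the
  same image under \<open>d\<close>, then \<open>I = J\<close>: for \<open>x \<in> J\<close> pick \<open>y \<in> I\<close> with \<open>d x = d y\<close>, so that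
  \<open>x - y\<close> is a cycle of \<open>J\<close>, hence lies in \<open>I\<close>. So a chain of dg-ideals stabilises as soon
  as the two induced chains of graded ideals of \<open>Z\<close> do.\<close>

definition graded_decomposition :: "(int \<Rightarrow> 'a::ring_1 set) \<Rightarrow> (int \<Rightarrow> 'a) \<Rightarrow> 'a \<Rightarrow> bool" where
  "graded_decomposition G c x \<longleftrightarrow>
     finite {n. c n \<noteq> 0} \<and> (\<forall>n. c n \<in> G n) \<and> x = (\<Sum>n\<in>{n. c n \<noteq> 0}. c n)"

lemma homogeneous_decomp_iff:
  "homogeneous_decomp G S x \<longleftrightarrow> (\<exists>c. graded_decomposition G c x \<and> (\<forall>n. c n \<in> S))"
  unfolding homogeneous_decomp_def graded_decomposition_def by blast

lemma graded_ideal_in_zero: "graded_ideal_in S G I \<Longrightarrow> 0 \<in> I"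
  by (simp add: graded_ideal_in_def)

lemma graded_ideal_in_diff: "graded_ideal_in S G I \<Longrightarrow> x \<in> I \<Longrightarrow> y \<in> I \<Longrightarrow> x - y \<in> I"
  by (simp add: graded_ideal_in_def)

lemma graded_ideal_in_add: "graded_ideal_in S G I \<Longrightarrow> x \<in> I \<Longrightarrow> y \<in> I \<Longrightarrow> x + y \<in> I"
  using graded_ideal_in_diff[of S G I x "0 - y"] graded_ideal_in_diff[of S G I 0 y]
  by (simp add: graded_ideal_in_zero)

lemma graded_ideal_in_mult: "graded_ideal_in S G I \<Longrightarrow> s \<in> S \<Longrightarrow> x \<in> I \<Longrightarrow> s * x \<in> I"
  by (simp add: graded_ideal_in_def)

lemma graded_ideal_in_homogeneous_decomp:
  "graded_ideal_in S G I \<Longrightarrow> x \<in> I \<Longrightarrow> homogeneous_decomp G I x"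
  by (simp add: graded_ideal_in_def)

locale dg_algebra =
  fixes smul :: "'r::comm_ring_1 \<Rightarrow> 'a::ring_1 \<Rightarrow> 'a"
    and G :: "int \<Rightarrow> 'a set"
    and d :: "'a \<Rightarrow> 'a"
  assumes dg_R_algebra: "dg_R_algebra smul G d"
begin

sublocale d: additive d
  using dg_R_algebra by unfold_locales (simp add: dg_R_algebra_def)

lemma zero_in_degree: "0 \<in> G n"
  using dg_R_algebra by (simp add: dg_R_algebra_def graded_R_algebra_def)

lemma d_in_degree: "x \<in> G n \<Longrightarrow> d x \<in> G (n + 1)"
  using dg_R_algebra by (simp add: dg_R_algebra_def)

lemma d_d [simp]: "d (d x) = 0"
  using dg_R_algebra by (simp add: dg_R_algebra_def)

lemma leibniz_homogeneous_factors:
  "a \<in> G m \<Longrightarrow> b \<in> G n \<Longrightarrow> d (a * b) = d a * b + (if even m then a * d b else - (a * d b))"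
  using dg_R_algebra unfolding dg_R_algebra_def homogeneous_def by blast

lemma ex1_graded_decomposition: "\<exists>!c. graded_decomposition G c x"
  using dg_R_algebra unfolding dg_R_algebra_def graded_R_algebra_def graded_decomposition_def
  by (elim conjE) (rule spec)

lemma graded_decompositionE:
  obtains c where "graded_decomposition G c x"
  using ex1_graded_decomposition by blast

lemma graded_decomposition_unique:
  "graded_decomposition G c x \<Longrightarrow> graded_decomposition G c' x \<Longrightarrow> c = c'"
  using ex1_graded_decomposition by blast

lemma graded_decomposition_d:
  assumes c: "graded_decomposition G c x"
  shows "graded_decomposition G (\<lambda>n. d (c (n - 1))) (d x)"
proof -
  let ?N = "(\<lambda>n. n + 1) ` {n. c n \<noteq> 0}"
  have supp: "{n. d (c (n - 1)) \<noteq> 0} \<subseteq> ?N"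
  proof
    fix n assume "n \<in> {n. d (c (n - 1)) \<noteq> 0}"
    then have "c (n - 1) \<noteq> 0" by (auto simp: d.zero)
    then show "n \<in> ?N" by (intro image_eqI[of _ _ "n - 1"]) auto
  qed
  have fin: "finite ?N"
    using c by (simp add: graded_decomposition_def)
  have "d x = (\<Sum>n\<in>{n. c n \<noteq> 0}. d (c n))"
    using c by (simp add: graded_decomposition_def d.sum)
  also have "\<dots> = (\<Sum>n\<in>?N. d (c (n - 1)))"
    by (simp add: sum.reindex)
  also have "\<dots> = (\<Sum>n\<in>{n. d (c (n - 1)) \<noteq> 0}. d (c (n - 1)))"
    using supp by (intro sum.mono_neutral_right fin) auto
  finally show ?thesis
    using c supp fin d_in_degree[of "c (_ - 1)" "_ - 1"]
    by (auto simp: graded_decomposition_def intro: finite_subset)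
qed

lemma cycle_components:
  assumes "graded_decomposition G c x" "d x = 0"
  shows "d (c n) = 0"
proof -
  have "graded_decomposition G (\<lambda>n. 0) 0"
    by (simp add: graded_decomposition_def zero_in_degree)
  then have "(\<lambda>n. d (c (n - 1))) = (\<lambda>n. 0)"
    using graded_decomposition_d[OF assms(1)] assms(2) by (metis graded_decomposition_unique)
  then show ?thesis
    by (metis add_diff_cancel_right')
qed

lemma graded_decomposition_cycleE:
  assumes "d x = 0"
  obtains c where "graded_decomposition G c x" "\<And>n. d (c n) = 0"
  using graded_decompositionE cycle_components[OF _ assms] by metis

lemma leibniz_homogeneous:
  assumes "a \<in> G m"
  shows "d (a * b) = d a * b + (if even m then a * d b else - (a * d b))"
proof -
  obtain e where e: "graded_decomposition G e b"
    by (rule graded_decompositionE)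
  let ?N = "{n. e n \<noteq> 0}"
  have b: "b = (\<Sum>n\<in>?N. e n)" and deg: "e n \<in> G n" for n
    using e by (auto simp: graded_decomposition_def)
  have db: "d b = (\<Sum>n\<in>?N. d (e n))"
    by (subst b) (simp add: d.sum)
  have "d (a * b) = (\<Sum>n\<in>?N. d (a * e n))"
    by (subst b) (simp add: sum_distrib_left d.sum)
  also have "\<dots> = (\<Sum>n\<in>?N. d a * e n + (if even m then a * d (e n) else - (a * d (e n))))"
    using leibniz_homogeneous_factors[OF assms deg] by simp
  also have "\<dots> = d a * (\<Sum>n\<in>?N. e n)
      + (if even m then a * (\<Sum>n\<in>?N. d (e n)) else - (a * (\<Sum>n\<in>?N. d (e n))))"
    by (cases "even m") (simp_all add: sum.distrib sum_subtractf sum_distrib_left)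
  also have "\<dots> = d a * b + (if even m then a * d b else - (a * d b))"
    by (simp add: b[symmetric] db)
  finally show ?thesis .
qed

lemma homogeneous_cycle_mult_d:
  assumes "a \<in> G m" "d a = 0"
  shows "a * d b = d ((if even m then a else - a) * b)"
  using leibniz_homogeneous[OF assms(1), of b] assms(2) by (simp add: d.minus)

lemma cycles_mult_closed:
  assumes "d s = 0" "d x = 0"
  shows "d (s * x) = 0"
proof -
  obtain c where c: "graded_decomposition G c s" "\<And>n. d (c n) = 0"
    using graded_decomposition_cycleE[OF assms(1)] by blast
  have "d (c n * x) = 0" for n
    using leibniz_homogeneous[of "c n" n x] c assms(2) by (simp add: graded_decomposition_def)
  then show ?thesis
    using c(1) by (simp add: graded_decomposition_def sum_distrib_right d.sum)
qed

lemma cycle_mult_d_eq_d_mult: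
  assumes "d s = 0"
  obtains t where "s * d x = d (t * x)"
proof -
  obtain c where c: "graded_decomposition G c s" "\<And>n. d (c n) = 0"
    using graded_decomposition_cycleE[OF assms(1)] by blast
  let ?sign = "\<lambda>n. if even n then c n else - c n"
  have "s * d x = (\<Sum>n\<in>{n. c n \<noteq> 0}. c n * d x)"
    using c(1) by (simp add: graded_decomposition_def sum_distrib_right)
  also have "\<dots> = d ((\<Sum>n\<in>{n. c n \<noteq> 0}. ?sign n) * x)"
  proof -
    have "c n * d x = d (?sign n * x)" for n
      using homogeneous_cycle_mult_d c by (simp add: graded_decomposition_def)
    then show ?thesis
      by (simp add: sum_distrib_right d.sum)
  qed
  finally show thesis
    by (rule that)
qed

lemma graded_ideal_Int_cycles:
  assumes I: "graded_ideal_in UNIV G I"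
  shows "graded_ideal_in (cycles d) G (I \<inter> cycles d)"
proof -
  have "homogeneous_decomp G (I \<inter> cycles d) x" if x: "x \<in> I \<inter> cycles d" for x
  proof -
    obtain c where c: "graded_decomposition G c x" "\<And>n. c n \<in> I"
      using graded_ideal_in_homogeneous_decomp[OF I] x by (auto simp: homogeneous_decomp_iff)
    have "d (c n) = 0" for n
      using cycle_components[OF c(1)] x by (simp add: cycles_def)
    then show ?thesis
      using c by (auto simp: homogeneous_decomp_iff cycles_def)
  qed
  moreover have "s * x \<in> I \<inter> cycles d" if "s \<in> cycles d" "x \<in> I \<inter> cycles d" for s x
    using that graded_ideal_in_mult[OF I] cycles_mult_closed by (simp add: cycles_def)
  moreover have "x - y \<in> I \<inter> cycles d" if "x \<in> I \<inter> cycles d" "y \<in> I \<inter> cycles d" for x y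
    using that graded_ideal_in_diff[OF I] by (simp add: cycles_def d.diff)
  moreover have "0 \<in> I \<inter> cycles d"
    using graded_ideal_in_zero[OF I] by (simp add: cycles_def d.zero)
  ultimately show ?thesis
    unfolding graded_ideal_in_def by blast
qed

lemma graded_ideal_image_d:
  assumes I: "graded_ideal_in UNIV G I"
  shows "graded_ideal_in (cycles d) G (d ` I)"
proof -
  have "s * z \<in> d ` I" if "s \<in> cycles d" "z \<in> d ` I" for s z
  proof -
    obtain x where x: "x \<in> I" "z = d x"
      using \<open>z \<in> d ` I\<close> by blast
    obtain t where "s * d x = d (t * x)"
      using cycle_mult_d_eq_d_mult \<open>s \<in> cycles d\<close> by (auto simp: cycles_def)
    then show ?thesis
      using x graded_ideal_in_mult[OF I] by auto
  qed
  moreover have "homogeneous_decomp G (d ` I) z" if "z \<in> d ` I" for z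
  proof -
    obtain x where x: "x \<in> I" "z = d x"
      using \<open>z \<in> d ` I\<close> by blast
    obtain c where c: "graded_decomposition G c x" "\<And>n. c n \<in> I"
      using graded_ideal_in_homogeneous_decomp[OF I] x(1) by (auto simp: homogeneous_decomp_iff)
    show ?thesis
      using graded_decomposition_d[OF c(1)] c(2) x(2) by (auto simp: homogeneous_decomp_iff)
  qed
  moreover have "d x - d y \<in> d ` I" if "x \<in> I" "y \<in> I" for x y
    using graded_ideal_in_diff[OF I that] by (metis d.diff imageI)
  moreover have "0 \<in> d ` I"
    using graded_ideal_in_zero[OF I] d.zero by (metis imageI)
  moreover have "d ` I \<subseteq> cycles d"
    by (auto simp: cycles_def)
  ultimately show ?thesis
    unfolding graded_ideal_in_def by blast
qed

lemma graded_ideal_eqI: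
  assumes I: "graded_ideal_in UNIV G I" and J: "graded_ideal_in UNIV G J"
    and "I \<subseteq> J" "I \<inter> cycles d = J \<inter> cycles d" "d ` I = d ` J"
  shows "I = J"
proof
  show "J \<subseteq> I"
  proof
    fix x assume "x \<in> J"
    then obtain y where y: "y \<in> I" "d x = d y"
      using \<open>d ` I = d ` J\<close> by blast
    then have "x - y \<in> J \<inter> cycles d"
      using \<open>x \<in> J\<close> \<open>I \<subseteq> J\<close> graded_ideal_in_diff[OF J] by (auto simp: cycles_def d.diff)
    then have "(x - y) + y \<in> I"
      using \<open>I \<inter> cycles d = J \<inter> cycles d\<close> y(1) graded_ideal_in_add[OF I] by blast
    then show "x \<in> I"
      by simp
  qed
qed fact

lemma graded_ideal_chain_stabilizes:
  fixes I :: "nat \<Rightarrow> 'a set"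
  assumes ideal: "\<And>n. graded_ideal_in UNIV G (I n)"
    and chain: "\<And>m n. I m \<subseteq> I n \<or> I n \<subseteq> I m"
    and cycles_stable: "\<exists>N. \<forall>n\<ge>N. I n \<inter> cycles d = I N \<inter> cycles d"
    and image_stable: "\<exists>N. \<forall>n\<ge>N. d ` I n = d ` I N"
  shows "\<exists>N. \<forall>n\<ge>N. I n = I N"
proof -
  obtain N1 where N1: "\<forall>n\<ge>N1. I n \<inter> cycles d = I N1 \<inter> cycles d"
    using cycles_stable ..
  obtain N2 where N2: "\<forall>n\<ge>N2. d ` I n = d ` I N2"
    using image_stable ..
  have "I n = I (max N1 N2)" if "n \<ge> max N1 N2" for n
  proof -
    from that have "N1 \<le> n" "N2 \<le> n"
      by auto
    then have Z: "I n \<inter> cycles d = I (max N1 N2) \<inter> cycles d"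
      and B: "d ` I n = d ` I (max N1 N2)"
      using N1[rule_format, OF max.cobounded1] N2[rule_format, OF max.cobounded2]
        N1[rule_format, of n] N2[rule_format, of n] by simp_all
    from chain[of n "max N1 N2"] show ?thesis
    proof
      assume "I n \<subseteq> I (max N1 N2)"
      then show ?thesis
        using graded_ideal_eqI[OF ideal ideal _ Z B] by blast
    next
      assume "I (max N1 N2) \<subseteq> I n"
      then show ?thesis
        using graded_ideal_eqI[OF ideal ideal _ Z[symmetric] B[symmetric]] by blast
    qed
  qed
  then show ?thesis
    by blast
qed

lemma dg_noetherian_if_graded_noetherian_cycles:
  assumes "graded_noetherian (cycles d) G"
  shows "dg_noetherian G d"
  unfolding dg_noetherian_def
proof (intro allI impI)
  fix I :: "nat \<Rightarrow> 'a set"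
  assume "(\<forall>n. dg_ideal G d (I n)) \<and> (\<forall>n. I n \<subseteq> I (Suc n))"
  then have ideal: "graded_ideal_in UNIV G (I n)" and incl: "I n \<subseteq> I (Suc n)" for n
    by (auto simp: dg_ideal_def)
  show "\<exists>N. \<forall>n\<ge>N. I n = I N"
  proof (rule graded_ideal_chain_stabilizes[OF ideal])
    show "I m \<subseteq> I n \<or> I n \<subseteq> I m" for m n
      using lift_Suc_mono_le[of I, OF incl] nat_le_linear[of m n] by blast
    show "\<exists>N. \<forall>n\<ge>N. I n \<inter> cycles d = I N \<inter> cycles d"
      by (rule assms[unfolded graded_noetherian_def, rule_format])
        (use incl graded_ideal_Int_cycles[OF ideal] in blast)
    show "\<exists>N. \<forall>n\<ge>N. d ` I n = d ` I N"
      by (rule assms[unfolded graded_noetherian_def, rule_format])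
        (use incl graded_ideal_image_d[OF ideal] in blast)
  qed
qed

lemma dg_artinian_if_graded_artinian_cycles:
  assumes "graded_artinian (cycles d) G"
  shows "dg_artinian G d"
  unfolding dg_artinian_def
proof (intro allI impI)
  fix I :: "nat \<Rightarrow> 'a set"
  assume "(\<forall>n. dg_ideal G d (I n)) \<and> (\<forall>n. I (Suc n) \<subseteq> I n)"
  then have ideal: "graded_ideal_in UNIV G (I n)" and incl: "I (Suc n) \<subseteq> I n" for n
    by (auto simp: dg_ideal_def)
  show "\<exists>N. \<forall>n\<ge>N. I n = I N"
  proof (rule graded_ideal_chain_stabilizes[OF ideal])
    show "I m \<subseteq> I n \<or> I n \<subseteq> I m" for m n
      using lift_Suc_antimono_le[of I, OF incl] nat_le_linear[of m n] by blast
    show "\<exists>N. \<forall>n\<ge>N. I n \<inter> cycles d = I N \<inter> cycles d"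
      by (rule assms[unfolded graded_artinian_def, rule_format])
        (use incl graded_ideal_Int_cycles[OF ideal] in blast)
    show "\<exists>N. \<forall>n\<ge>N. d ` I n = d ` I N"
      by (rule assms[unfolded graded_artinian_def, rule_format])
        (use incl graded_ideal_image_d[OF ideal] in blast)
  qed
qed

end

theorem corollary2p3:
  fixes smul :: "'r::comm_ring_1 \<Rightarrow> 'a::ring_1 \<Rightarrow> 'a"
    and G :: "int \<Rightarrow> 'a set"
    and d :: "'a \<Rightarrow> 'a"
  assumes "dg_R_algebra smul G d"
  shows "(graded_noetherian (cycles d) G \<longrightarrow> dg_noetherian G d) \<and>
         (graded_artinian (cycles d) G \<longrightarrow> dg_artinian G d)"
proof -
  interpret dg_algebra smul G d
    by (rule dg_algebra.intro) (fact assms)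
  show ?thesis
    using dg_noetherian_if_graded_noetherian_cycles dg_artinian_if_graded_artinian_cycles
    by blast
qed

end
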